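(* Let $\xi(s)=\pi^{-s/2}\Gamma(s/2)\zeta(s)$, $\chi(s)=s(s-1)\xi(s)$, $A=\pi/3-1$, and \[ Z(s) = (s-1)(As-A+1)\, \chi(s+1) \chi(2s) - (s-2)\, \chi(s) \chi(2s) - s (As-1)\, \chi(s-1) \chi(2s-1) - (s+1)\, \chi(s) \chi(2s-1). \] Then $Z(s)$ has no zero in the half-plane $\Re(s)\geq 20$. *)

theory Defs
  imports "HOL-Analysis.Analysis"
begin

text \<open>This agrees with the
  Riemann zeta function on the half-plane Re s > 1, which is the only region
  where it is used below (all arguments have real part at least 19).\<close>
definition zeta_dir :: "complex \<Rightarrow> complex" where
  "zeta_dir s = (\<Sum>n. 1 / (of_nat (Suc n)) powr s)"

definition xi_fun :: "complex \<Rightarrow> complex" where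
  "xi_fun s = (complex_of_real pi) powr (- s / 2) * Gamma (s / 2) * zeta_dir s"

definition chi_fun :: "complex \<Rightarrow> complex" where
  "chi_fun s = s * (s - 1) * xi_fun s"

definition A_const :: complex where
  "A_const = complex_of_real (pi / 3 - 1)"

definition Z_fun :: "complex \<Rightarrow> complex" where
  "Z_fun s =
     (s - 1) * (A_const * s - A_const + 1) * chi_fun (s + 1) * chi_fun (2 * s)
   - (s - 2) * chi_fun s * chi_fun (2 * s)
   - s * (A_const * s - 1) * chi_fun (s - 1) * chi_fun (2 * s - 1)
   - (s + 1) * chi_fun s * chi_fun (2 * s - 1)"

end

theory Submission
  imports Defs
begin

text \<open>Dividing \<open>Z(s)\<close> by \<open>\<chi>(s) \<chi>(2 s)\<close> leaves four terms built from the quotients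
  \<open>\<chi>(s + 1)/\<chi>(s)\<close>, \<open>\<chi>(s - 1)/\<chi>(s)\<close> and \<open>\<chi>(2 s - 1)/\<chi>(2 s)\<close>, each of which is an explicit rational
  factor times a quotient of Gamma values times a quotient of zeta values. For \<open>Re s \<ge> 20\<close> the zeta
  values lie within 1% of 1, and \<open>|\<Gamma>(z + 1/2) / \<Gamma>(z)|\<^sup>2\<close> lies between \<open>(1 - 1/(4 Re z)) |z|\<close> and
  \<open>|z| / (1 - 1/(4 Re z))\<close>: it is \<open>|z|\<close> times the limit of a Wallis-type product whose factors differ
  from 1 by telescoping amounts summing to at most \<open>1/(4 Re z)\<close>. Consequently the term
  \<open>(s - 1)(A s - A + 1) \<chi>(s + 1)/\<chi>(s)\<close> has size of order \<open>|s|^(5/2)\<close> and dominates the other three,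
  which are \<open>O(|s|)\<close>.\<close>

lemma norm_prod_near_one_bounds:
  fixes f :: "'a \<Rightarrow> 'b :: real_normed_field"
  assumes "finite A"
    and f_near: "\<And>k. k \<in> A \<Longrightarrow> norm (f k - 1) \<le> e k"
    and e_nonneg: "\<And>k. k \<in> A \<Longrightarrow> 0 \<le> e k"
    and "sum e A \<le> E" "E < 1"
  shows "1 - E \<le> norm (prod f A)" and "norm (prod f A) \<le> 1 / (1 - E)"
proof -
  have e_le_1: "e k \<le> 1" if "k \<in> A" for k
  proof -
    have "e k \<le> sum e A" by (rule member_le_sum) (use that e_nonneg \<open>finite A\<close> in auto)
    thus ?thesis using assms by linarith
  qed
  have low: "1 - e k \<le> norm (f k)" if "k \<in> A" for k
    using norm_triangle_ineq2[of 1 "f k"] norm_minus_commute[of 1 "f k"] f_near[OF that] by simp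
  have "1 - E \<le> 1 - sum e A" using assms by simp
  also have "\<dots> \<le> (\<Prod>k\<in>A. 1 - e k)"
    by (rule Weierstrass_prod_ineq) (use e_nonneg e_le_1 in auto)
  also have "\<dots> \<le> norm (prod f A)"
    unfolding prod_norm[symmetric] by (rule prod_mono) (use e_le_1 low in auto)
  finally show "1 - E \<le> norm (prod f A)" .
  have high: "norm (f k) \<le> 1 + e k" if "k \<in> A" for k
    using norm_triangle_ineq[of "f k - 1" 1] f_near[OF that] by simp
  have "norm (prod f A) \<le> (\<Prod>k\<in>A. 1 + e k)"
    unfolding prod_norm[symmetric] by (rule prod_mono) (use high in auto)
  also have "\<dots> \<le> 1 / (\<Prod>k\<in>A. 1 - e k)"
  proof -
    have "(\<Prod>k\<in>A. 1 + e k) * (\<Prod>k\<in>A. 1 - e k) = (\<Prod>k\<in>A. 1 - e k ^ 2)"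
      by (simp add: prod.distrib[symmetric] power2_eq_square algebra_simps)
    also have "\<dots> \<le> 1"
      by (rule prod_le_1) (use e_nonneg e_le_1 in \<open>auto simp: power_le_one\<close>)
    finally show ?thesis
      using Weierstrass_prod_ineq[of A e] e_nonneg e_le_1 assms
      by (simp add: field_simps)
  qed
  also have "\<dots> \<le> 1 / (1 - E)"
    using Weierstrass_prod_ineq[of A e] e_nonneg e_le_1 assms
    by (intro divide_left_mono) auto
  finally show "norm (prod f A) \<le> 1 / (1 - E)" .
qed

lemma Gamma_nonzero_of_Re_pos: "0 < Re z \<Longrightarrow> Gamma (z :: complex) \<noteq> 0"
  by (rule Gamma_nonzero) (auto elim!: nonpos_Ints_cases simp: complex_eq_iff)

definition wallis_prod :: "complex \<Rightarrow> nat \<Rightarrow> complex" where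
  "wallis_prod z n = (\<Prod>k<n. (z + of_nat k) * (z + of_nat k + 1) / (z + of_nat k + 1/2)\<^sup>2)"

lemma norm_wallis_factor_minus_one_le:
  fixes w :: complex
  assumes "0 < Re w"
  shows "norm (w * (w + 1) / (w + 1/2)\<^sup>2 - 1) \<le> 1 / (4 * Re w) - 1 / (4 * (Re w + 1))"
proof -
  define x where "x = Re w"
  have "x + 1/2 \<le> norm (w + 1/2)"
    using complex_Re_le_cmod[of "w + 1/2"] by (simp add: x_def)
  hence sq: "(x + 1/2)\<^sup>2 \<le> norm (w + 1/2) ^ 2"
    using assms by (intro power_mono) (auto simp: x_def)
  have "w + 1/2 \<noteq> 0" using assms by (auto simp: complex_eq_iff)
  moreover have "w * (w + 1) = (w + 1/2)\<^sup>2 - 1/4" by (simp add: power2_eq_square algebra_simps)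
  ultimately have "w * (w + 1) / (w + 1/2)\<^sup>2 - 1 = - (1/4) / (w + 1/2)\<^sup>2"
    by (simp add: diff_divide_distrib)
  hence "norm (w * (w + 1) / (w + 1/2)\<^sup>2 - 1) = (1/4) / norm (w + 1/2) ^ 2"
    by (simp add: norm_divide norm_power)
  also have "\<dots> \<le> (1/4) / (x * (x + 1))"
  proof (intro divide_left_mono mult_pos_pos)
    show "x * (x + 1) \<le> norm (w + 1/2) ^ 2"
      using sq by (simp add: power2_eq_square algebra_simps)
  qed (use assms sq in \<open>auto simp: x_def\<close>)
  also have "\<dots> = 1 / (4 * x) - 1 / (4 * (x + 1))"
    using assms by (simp add: x_def field_simps)
  finally show ?thesis by (simp add: x_def)
qed

lemma norm_wallis_prod_bounds:
  assumes "1/4 < Re z"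
  shows "1 - 1 / (4 * Re z) \<le> norm (wallis_prod z n)"
    and "norm (wallis_prod z n) \<le> 1 / (1 - 1 / (4 * Re z))"
proof -
  define x where "x = Re z"
  define g where "g k = 1 / (4 * (x + real k))" for k
  define e where "e k = g k - g (Suc k)" for k
  have e_near: "norm ((z + of_nat k) * (z + of_nat k + 1) / (z + of_nat k + 1/2)\<^sup>2 - 1) \<le> e k" for k
    using norm_wallis_factor_minus_one_le[of "z + of_nat k"] assms
    by (simp add: e_def g_def x_def algebra_simps)
  have e_nonneg: "0 \<le> e k" for k
    using assms by (simp add: e_def g_def x_def field_simps)
  have "sum e {..<n} = 1 / (4 * x) - 1 / (4 * (x + n))"
    using sum_lessThan_telescope'[of g n] by (simp add: e_def g_def)
  also have "\<dots> \<le> 1 / (4 * x)" using assms by (simp add: x_def)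
  finally have "sum e {..<n} \<le> 1 / (4 * x)" .
  moreover have "1 / (4 * x) < 1" using assms by (simp add: x_def field_simps)
  ultimately show "1 - 1 / (4 * Re z) \<le> norm (wallis_prod z n)"
    and "norm (wallis_prod z n) \<le> 1 / (1 - 1 / (4 * Re z))"
    unfolding wallis_prod_def x_def[symmetric]
    using norm_prod_near_one_bounds[of "{..<n}", OF _ e_near e_nonneg] by auto
qed

lemma pochhammer_sq_eq_wallis_prod:
  fixes z :: complex
  assumes "0 < Re z"
  shows "pochhammer z n ^ 2 * (z + of_nat n) = z * wallis_prod z n * pochhammer (z + 1/2) n ^ 2"
proof (induction n)
  case (Suc n)
  define W where "W = z + 1/2 + of_nat n"
  have "W \<noteq> 0" using assms by (auto simp: W_def complex_eq_iff)
  have "pochhammer z (Suc n) ^ 2 * (z + of_nat (Suc n))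
      = (pochhammer z n ^ 2 * (z + of_nat n)) * ((z + of_nat n) * (z + of_nat n + 1))"
    by (simp add: pochhammer_rec' power2_eq_square algebra_simps)
  also have "\<dots> = z * (wallis_prod z n * ((z + of_nat n) * (z + of_nat n + 1) / W\<^sup>2))
      * (pochhammer (z + 1/2) n * W)\<^sup>2"
    unfolding Suc.IH using \<open>W \<noteq> 0\<close> by (simp add: power_mult_distrib mult_ac)
  also have "\<dots> = z * wallis_prod z (Suc n) * pochhammer (z + 1/2) (Suc n) ^ 2"
    by (simp add: W_def wallis_prod_def pochhammer_rec' add_ac mult.commute)
  finally show ?case .
qed (simp add: wallis_prod_def)

lemma Gamma_series_half_shift_sq:
  fixes z :: complex
  assumes "0 < Re z" "0 < n"
  shows "Gamma_series (z + 1/2) n ^ 2 / (z * Gamma_series z n ^ 2)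
       = of_nat n * wallis_prod z (Suc n) / (z + of_nat n + 1)"
proof -
  define l where "l = complex_of_real (ln (real n))"
  have exp_sq: "exp (l / 2) ^ 2 = of_nat n"
    using assms(2) by (simp add: l_def power2_eq_square exp_add[symmetric] exp_of_real)
  have not_nonpos_int: "z \<notin> \<int>\<^sub>\<le>\<^sub>0" "z + 1/2 \<notin> \<int>\<^sub>\<le>\<^sub>0"
    using assms(1) by (auto elim!: nonpos_Ints_cases simp: complex_eq_iff)
  have nonzero: "pochhammer z (Suc n) \<noteq> 0" "pochhammer (z + 1/2) (Suc n) \<noteq> 0"
    using not_nonpos_int pochhammer_eq_0_imp_nonpos_Int by blast+
  have "z \<noteq> 0" "z + of_nat n + 1 \<noteq> 0"
    using assms(1) by (auto simp: complex_eq_iff)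
  note nonzero = nonzero this
  have "Gamma_series (z + 1/2) n ^ 2 / (z * Gamma_series z n ^ 2)
      = exp (l / 2) ^ 2 * pochhammer z (Suc n) ^ 2 / (z * pochhammer (z + 1/2) (Suc n) ^ 2)"
    unfolding Gamma_series_def l_def[symmetric] distrib_right exp_add
    using nonzero by (simp add: field_simps power2_eq_square)
  also have "\<dots> = of_nat n * wallis_prod z (Suc n) / (z + of_nat n + 1)"
    using pochhammer_sq_eq_wallis_prod[OF assms(1), of "Suc n"] nonzero
    by (simp add: exp_sq field_simps add_ac)
  finally show ?thesis .
qed

lemma wallis_prod_LIMSEQ:
  assumes "0 < Re z"
  shows "wallis_prod z \<longlonglongrightarrow> Gamma (z + 1/2) ^ 2 / (z * Gamma z ^ 2)"
proof -
  have "z \<noteq> 0" "Gamma z \<noteq> 0" using assms Gamma_nonzero_of_Re_pos by auto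
  hence "(\<lambda>n. Gamma_series (z + 1/2) n ^ 2 / (z * Gamma_series z n ^ 2) * (1 + (z + 1) / of_nat n))
      \<longlonglongrightarrow> Gamma (z + 1/2) ^ 2 / (z * Gamma z ^ 2) * (1 + 0)"
    by (intro tendsto_intros Gamma_series_LIMSEQ tendsto_divide_0[OF tendsto_const]
        tendsto_of_nat) auto
  moreover have "eventually (\<lambda>n. Gamma_series (z + 1/2) n ^ 2 / (z * Gamma_series z n ^ 2)
      * (1 + (z + 1) / of_nat n) = wallis_prod z (Suc n)) sequentially"
    using eventually_gt_at_top[of 0]
  proof eventually_elim
    case (elim n)
    have "z + of_nat n + 1 \<noteq> 0" using assms by (auto simp: complex_eq_iff)
    moreover have "1 + (z + 1) / of_nat n = (z + of_nat n + 1) / of_nat n"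
      using elim by (simp add: field_simps)
    ultimately show ?case
      using elim by (simp add: Gamma_series_half_shift_sq[OF assms elim])
  qed
  ultimately have "(\<lambda>n. wallis_prod z (Suc n)) \<longlonglongrightarrow> Gamma (z + 1/2) ^ 2 / (z * Gamma z ^ 2)"
    by (simp add: tendsto_cong)
  thus ?thesis by (rule LIMSEQ_imp_Suc)
qed

lemma norm_Gamma_half_shift_sq_bounds:
  fixes z :: complex
  assumes "1/4 < Re z"
  shows "(1 - 1 / (4 * Re z)) * norm z \<le> norm (Gamma (z + 1/2) / Gamma z) ^ 2"
    and "norm (Gamma (z + 1/2) / Gamma z) ^ 2 \<le> norm z / (1 - 1 / (4 * Re z))"
proof -
  define L where "L = norm (Gamma (z + 1/2) ^ 2 / (z * Gamma z ^ 2))"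
  have lim: "(\<lambda>n. norm (wallis_prod z n)) \<longlonglongrightarrow> L"
    unfolding L_def using assms by (intro tendsto_norm wallis_prod_LIMSEQ) auto
  have lower: "1 - 1 / (4 * Re z) \<le> L"
    by (rule tendsto_lowerbound[OF lim]) (use norm_wallis_prod_bounds(1)[OF assms] in auto)
  have upper: "L \<le> 1 / (1 - 1 / (4 * Re z))"
    by (rule tendsto_upperbound[OF lim]) (use norm_wallis_prod_bounds(2)[OF assms] in auto)
  have sq: "norm (Gamma (z + 1/2) / Gamma z) ^ 2 = norm z * L"
    using assms by (auto simp: L_def norm_divide norm_mult norm_power power_divide)
  show "(1 - 1 / (4 * Re z)) * norm z \<le> norm (Gamma (z + 1/2) / Gamma z) ^ 2"
    unfolding sq using mult_right_mono[OF lower norm_ge_zero[of z]] by (simp add: mult.commute)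
  have "norm z * L \<le> norm z * (1 / (1 - 1 / (4 * Re z)))"
    using mult_left_mono[OF upper norm_ge_zero[of z]] .
  thus "norm (Gamma (z + 1/2) / Gamma z) ^ 2 \<le> norm z / (1 - 1 / (4 * Re z))"
    unfolding sq by simp
qed

lemma norm_zeta_dir_term_le:
  fixes w :: complex
  assumes "2 \<le> Re w"
  shows "norm (1 / of_nat (Suc (Suc n)) powr w)
       \<le> 2 powr (2 - Re w) * (1 / real (Suc n) - 1 / real (Suc (Suc n)))"
proof -
  define m where "m = real (Suc (Suc n))"
  have "m * (m - 1) * 2 powr (Re w - 2) \<le> m powr 2 * m powr (Re w - 2)"
  proof (rule mult_mono)
    show "m * (m - 1) \<le> m powr 2" by (simp add: m_def power2_eq_square)
    show "2 powr (Re w - 2) \<le> m powr (Re w - 2)" using assms by (intro powr_mono2) (auto simp: m_def)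
  qed (use assms in \<open>auto simp: m_def\<close>)
  also have "\<dots> = m powr Re w" by (simp add: powr_add[symmetric])
  finally have "1 / m powr Re w \<le> 1 / (m * (m - 1) * 2 powr (Re w - 2))"
    by (intro divide_left_mono) (auto simp: m_def)
  also have "\<dots> = 2 powr (2 - Re w) * (1 / (m - 1) - 1 / m)"
    by (simp add: m_def powr_diff field_simps)
  finally show ?thesis by (simp add: m_def norm_divide norm_powr_real_powr)
qed

lemma norm_zeta_dir_minus_one_le:
  assumes "2 \<le> Re w"
  shows "norm (zeta_dir w - 1) \<le> 2 powr (2 - Re w)"
proof -
  define f where "f n = 1 / of_nat (Suc n) powr w" for n
  define b where "b n = 2 powr (2 - Re w) * (1 / real (Suc n) - 1 / real (Suc (Suc n)))" for n
  have "(\<lambda>n. 1 / real (Suc n)) \<longlonglongrightarrow> 0"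
    using LIMSEQ_inverse_real_of_nat by (simp add: inverse_eq_divide)
  from telescope_sums'[OF this]
  have "(\<lambda>n. 1 / real (Suc n) - 1 / real (Suc (Suc n))) sums (1 - 0)" by simp
  hence b_sums: "b sums 2 powr (2 - Re w)" unfolding b_def using sums_mult by fastforce
  have f_le: "norm (f (Suc n)) \<le> b n" for n
    unfolding f_def b_def using norm_zeta_dir_term_le[OF assms] .
  have norm_summable: "summable (\<lambda>n. norm (f (Suc n)))"
    by (rule summable_comparison_test'[OF sums_summable[OF b_sums]]) (simp add: f_le)
  hence "summable f" using summable_norm_cancel summable_Suc_iff by blast
  moreover have "zeta_dir w = suminf f" "f 0 = 1" unfolding zeta_dir_def f_def by simp_all
  ultimately have "zeta_dir w - 1 = (\<Sum>n. f (Suc n))" by (simp add: suminf_split_head)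
  hence "norm (zeta_dir w - 1) \<le> (\<Sum>n. norm (f (Suc n)))"
    using summable_norm[OF norm_summable] by simp
  also have "\<dots> \<le> 2 powr (2 - Re w)"
    using suminf_le[OF f_le norm_summable sums_summable[OF b_sums]] sums_unique[OF b_sums] by simp
  finally show ?thesis .
qed

lemma zeta_dir_nonzero:
  assumes "2 < Re w"
  shows "zeta_dir w \<noteq> 0"
proof
  assume "zeta_dir w = 0"
  hence "1 \<le> 2 powr (2 - Re w)" using norm_zeta_dir_minus_one_le[of w] assms by simp
  moreover have "2 powr (2 - Re w) < 2 powr 0" using assms by (intro powr_less_mono) auto
  ultimately show False by simp
qed

lemma norm_zeta_dir_bounds:
  assumes "9 \<le> Re w"
  shows "99/100 \<le> norm (zeta_dir w)" and "norm (zeta_dir w) \<le> 101/100"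
proof -
  have "norm (zeta_dir w - 1) \<le> 2 powr (2 - Re w)"
    using assms by (intro norm_zeta_dir_minus_one_le) auto
  also have "\<dots> \<le> 2 powr (-7)" using assms by (intro powr_mono) auto
  finally have near: "norm (zeta_dir w - 1) \<le> 1/128" by (simp add: powr_minus powr_realpow)
  show "99/100 \<le> norm (zeta_dir w)"
    using near norm_triangle_ineq2[of 1 "zeta_dir w"] norm_minus_commute[of 1 "zeta_dir w"] by simp
  show "norm (zeta_dir w) \<le> 101/100"
    using near norm_triangle_ineq[of "zeta_dir w - 1" 1] by simp
qed

lemma norm_chi_fun:
  "norm (chi_fun w) = norm w * norm (w - 1) * pi powr (- Re w / 2) * norm (Gamma (w / 2)) * norm (zeta_dir w)"
proof -
  have "norm (complex_of_real pi powr (- w / 2)) = pi powr (- Re w / 2)"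
    by (subst norm_powr_real_powr) auto
  thus ?thesis unfolding chi_fun_def xi_fun_def by (simp add: norm_mult)
qed

lemma chi_fun_nonzero:
  assumes "2 < Re w"
  shows "chi_fun w \<noteq> 0"
proof -
  have "w \<noteq> 0" "w - 1 \<noteq> 0" using assms by (auto simp: complex_eq_iff)
  moreover have "Gamma (w / 2) \<noteq> 0" using assms by (intro Gamma_nonzero_of_Re_pos) simp
  moreover have "zeta_dir w \<noteq> 0" using assms by (rule zeta_dir_nonzero)
  ultimately have "norm (chi_fun w) \<noteq> 0" unfolding norm_chi_fun by simp
  thus ?thesis by simp
qed

lemma pi_powr_add_half: "pi powr (a + 1/2) = pi powr a * sqrt pi"
  by (simp add: powr_add powr_half_sqrt)

lemma norm_chi_fun_succ_div:
  assumes "2 < Re w"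
  shows "norm (chi_fun (w + 1) / chi_fun w)
       = norm (w + 1) * norm (Gamma ((w + 1) / 2) / Gamma (w / 2)) * norm (zeta_dir (w + 1))
         / (sqrt pi * norm (w - 1) * norm (zeta_dir w))"
proof -
  have "pi powr (- Re (w + 1) / 2) * sqrt pi = pi powr (- Re w / 2)"
    using pi_powr_add_half[of "- Re (w + 1) / 2"] by (simp add: field_simps)
  moreover have "w \<noteq> 0" "w - 1 \<noteq> 0" using assms by (auto simp: complex_eq_iff)
  moreover have "Gamma (w / 2) \<noteq> 0" using assms by (intro Gamma_nonzero_of_Re_pos) simp
  moreover have "zeta_dir w \<noteq> 0" using assms by (intro zeta_dir_nonzero) simp
  ultimately show ?thesis
    unfolding norm_divide norm_chi_fun by (simp add: field_simps)
qed

lemma norm_chi_fun_pred_div: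
  assumes "2 < Re w"
  shows "norm (chi_fun (w - 1) / chi_fun w)
       = 2 * sqrt pi * norm (w - 2) * norm (Gamma ((w + 1) / 2) / Gamma (w / 2)) * norm (zeta_dir (w - 1))
         / (norm w * norm (w - 1) * norm (zeta_dir w))"
proof -
  have "(w - 1) / 2 \<notin> \<int>\<^sub>\<le>\<^sub>0" using assms by (auto elim!: nonpos_Ints_cases simp: complex_eq_iff)
  from Gamma_plus1[OF this] have "2 * Gamma ((w + 1) / 2) = (w - 1) * Gamma ((w - 1) / 2)"
    by (simp add: field_simps)
  from arg_cong[where f = norm, OF this]
  have "2 * norm (Gamma ((w + 1) / 2)) = norm (w - 1) * norm (Gamma ((w - 1) / 2))"
    by (simp add: norm_mult)
  moreover have "pi powr (- Re (w - 1) / 2) = pi powr (- Re w / 2) * sqrt pi"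
    using pi_powr_add_half[of "- Re w / 2"] by (simp add: field_simps)
  moreover have "w \<noteq> 0" "w - 1 \<noteq> 0" using assms by (auto simp: complex_eq_iff)
  moreover have "Gamma (w / 2) \<noteq> 0" using assms by (intro Gamma_nonzero_of_Re_pos) simp
  moreover have "zeta_dir w \<noteq> 0" using assms by (intro zeta_dir_nonzero) simp
  ultimately show ?thesis
    unfolding norm_divide norm_chi_fun by (simp add: field_simps)
qed

lemma norm_chi_fun_double_pred_div:
  assumes "1 < Re w"
  shows "norm (chi_fun (2 * w - 1) / chi_fun (2 * w))
       = sqrt pi * norm (w - 1) * norm (Gamma (w - 1/2) / Gamma w) * norm (zeta_dir (2 * w - 1))
         / (norm w * norm (zeta_dir (2 * w)))"
proof -
  have shifts: "(2 * w - 1) / 2 = w - 1/2" "2 * w - 1 - 1 = 2 * (w - 1)" "2 * w / 2 = w"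
    by (simp_all add: field_simps)
  have "pi powr (- Re (2 * w - 1) / 2) = pi powr (- Re (2 * w) / 2) * sqrt pi"
    using pi_powr_add_half[of "- Re w"] by (simp add: field_simps)
  moreover have "w \<noteq> 0" "2 * w - 1 \<noteq> 0" using assms by (auto simp: complex_eq_iff)
  moreover have "Gamma w \<noteq> 0" using assms by (intro Gamma_nonzero_of_Re_pos) simp
  moreover have "zeta_dir (2 * w) \<noteq> 0" using assms by (intro zeta_dir_nonzero) simp
  ultimately show ?thesis
    unfolding norm_divide norm_chi_fun shifts norm_mult by (simp add: field_simps)
qed

lemma norm_le_norm_add_of_real:
  fixes s :: complex
  assumes "0 \<le> Re s" "0 \<le> c"
  shows "norm s \<le> norm (s + of_real c)"
proof (rule power2_le_imp_le)
  show "norm s ^ 2 \<le> norm (s + of_real c) ^ 2"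
    unfolding cmod_power2 using assms by (simp add: power2_eq_square algebra_simps)
qed simp

lemma norm_diff_of_real_le:
  fixes s :: complex
  assumes "0 \<le> c" "c \<le> 2 * Re s"
  shows "norm (s - of_real c) \<le> norm s"
proof (rule power2_le_imp_le)
  have "c * c \<le> 2 * Re s * c" using assms by (intro mult_right_mono) auto
  thus "norm (s - of_real c) ^ 2 \<le> norm s ^ 2"
    unfolding cmod_power2 by (simp add: power2_eq_square algebra_simps)
qed simp

lemma A_const_bounds: "A_const = of_real (pi / 3 - 1)" "0.0471 \<le> pi / 3 - 1" "pi / 3 - 1 \<le> 0.0472"
  using pi_approx by (simp_all add: A_const_def)

lemma sqrt_pi_bounds: "1.772 \<le> sqrt pi" "sqrt pi \<le> 1.7725"
proof -
  have "sqrt (1.772\<^sup>2) \<le> sqrt pi" "sqrt pi \<le> sqrt (1.7725\<^sup>2)"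
    using pi_approx by (simp_all add: power2_eq_square)
  thus "1.772 \<le> sqrt pi" "sqrt pi \<le> 1.7725" by simp_all
qed

lemma norm_A_const_affine_bounds:
  fixes s :: complex
  assumes "20 \<le> Re s"
  shows "(0.0471 * norm s + 1.89) / 2 \<le> norm (A_const * s - A_const + 1)"
    and "norm (A_const * s - 1) \<le> 0.0472 * norm s"
proof -
  define a where "a = pi / 3 - 1"
  have A: "A_const = of_real a" and a: "0.0471 \<le> a" "a \<le> 0.0472"
    using A_const_bounds unfolding a_def by simp_all
  have "a * norm s \<le> norm (of_real a * s + of_real (1 - a))"
    using norm_le_norm_add_of_real[of "of_real a * s" "1 - a"] assms a by (simp add: norm_mult)
  moreover have "a * Re s - a + 1 \<le> norm (of_real a * s + of_real (1 - a))"
    using complex_Re_le_cmod[of "of_real a * s + of_real (1 - a)"] by simp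
  moreover have "19 * a \<le> a * Re s - a" using assms a by (simp add: algebra_simps)
  moreover have "0.0471 * norm s \<le> a * norm s" using a by (intro mult_right_mono) auto
  moreover have "norm (A_const * s - A_const + 1) = norm (of_real a * s + of_real (1 - a))"
    by (simp add: A algebra_simps)
  ultimately show "(0.0471 * norm s + 1.89) / 2 \<le> norm (A_const * s - A_const + 1)"
    using a by (simp; linarith)
  have "A_const * s - 1 = of_real a * (s - of_real (1 / a))"
    using a by (simp add: A right_diff_distrib)
  hence "norm (A_const * s - 1) = a * norm (s - of_real (1 / a))"
    using a by (simp add: norm_mult)
  also have "\<dots> \<le> a * norm s"
  proof (intro mult_left_mono norm_diff_of_real_le)
    have "a * 20 \<le> a * Re s" using a assms by (intro mult_left_mono) auto
    hence "1 \<le> a * (2 * Re s)" using a by (simp; linarith)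
    thus "1 / a \<le> 2 * Re s" using a by (simp add: field_simps)
  qed (use a in auto)
  also have "\<dots> \<le> 0.0472 * norm s" using a by (intro mult_right_mono) auto
  finally show "norm (A_const * s - 1) \<le> 0.0472 * norm s" .
qed

lemma norm_Gamma_ratio_bounds:
  fixes s :: complex
  assumes "20 \<le> Re s"
  defines "\<rho> \<equiv> norm (Gamma ((s + 1) / 2) / Gamma (s / 2))"
    and "\<theta> \<equiv> norm (Gamma (s - 1/2) / Gamma s)"
  shows "39/80 * norm s \<le> \<rho>\<^sup>2" and "\<rho> \<le> 0.161 * norm s" and "\<rho> * \<theta> \<le> 3/4"
proof -
  define u where "u = norm s"
  have u: "20 \<le> u" using complex_Re_le_cmod[of s] assms by (simp add: u_def)
  have half: "s / 2 + 1/2 = (s + 1) / 2" "Re (s / 2) = Re s / 2" "norm (s / 2) = u / 2"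
    by (simp_all add: u_def add_divide_distrib norm_divide)
  have c: "39/40 \<le> 1 - 1 / (4 * Re (s / 2))" using assms by (simp add: field_simps)
  note \<rho>_bounds = norm_Gamma_half_shift_sq_bounds[of "s / 2", unfolded half(1), folded \<rho>_def]
  have "39/80 * u \<le> (1 - 1 / (4 * Re (s / 2))) * (u / 2)"
    using mult_right_mono[OF c, of "u / 2"] u by simp
  also have "\<dots> = (1 - 1 / (4 * Re (s / 2))) * norm (s / 2)" by (simp only: half(3))
  also have "\<dots> \<le> \<rho>\<^sup>2" using \<rho>_bounds(1) assms by simp
  finally show \<rho>_lower: "39/80 * norm s \<le> \<rho>\<^sup>2" by (simp add: u_def)
  have "\<rho>\<^sup>2 \<le> norm (s / 2) / (1 - 1 / (4 * Re (s / 2)))" using \<rho>_bounds(2) assms by simp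
  also have "\<dots> \<le> (u / 2) / (39/40)" unfolding half(3) using c u by (intro divide_left_mono) auto
  finally have \<rho>_upper: "\<rho>\<^sup>2 \<le> 20/39 * u" by simp
  also have "\<dots> \<le> (0.161 * u)\<^sup>2" using u by (simp add: power2_eq_square)
  finally show "\<rho> \<le> 0.161 * norm s"
    unfolding u_def by (rule power2_le_imp_le) (use u in \<open>simp add: u_def\<close>)
  define R where "R = norm (Gamma s / Gamma (s - 1/2))"
  have "R * \<theta> = 1"
    using Gamma_nonzero_of_Re_pos[of s] Gamma_nonzero_of_Re_pos[of "s - 1/2"] assms
    by (simp add: R_def \<theta>_def norm_divide)
  have "77/78 * (u - 1/2) \<le> (1 - 1 / (4 * Re (s - 1/2))) * norm (s - 1/2)"
  proof (rule mult_mono)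
    show "u - 1/2 \<le> norm (s - 1/2)" using norm_triangle_ineq2[of s "1/2"] by (simp add: u_def)
  qed (use assms u in \<open>auto simp: field_simps\<close>)
  also have "\<dots> \<le> R\<^sup>2"
    using norm_Gamma_half_shift_sq_bounds(1)[of "s - 1/2"] assms by (simp add: R_def)
  finally have "77/78 * (u - 1/2) * \<theta>\<^sup>2 \<le> R\<^sup>2 * \<theta>\<^sup>2"
    by (rule mult_right_mono) simp
  also have "\<dots> = (R * \<theta>)\<^sup>2" by (simp add: power_mult_distrib)
  finally have "77/78 * (u - 1/2) * \<theta>\<^sup>2 \<le> 1" using \<open>R * \<theta> = 1\<close> by simp
  have "(\<rho> * \<theta>)\<^sup>2 \<le> (3/4)\<^sup>2"
  proof -
    have "(\<rho> * \<theta>)\<^sup>2 \<le> 20/39 * u * \<theta>\<^sup>2"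
      unfolding power_mult_distrib by (rule mult_right_mono[OF \<rho>_upper]) simp
    also have "\<dots> \<le> 9/16 * (77/78 * (u - 1/2)) * \<theta>\<^sup>2"
      using u by (intro mult_right_mono) auto
    also have "\<dots> \<le> (3/4)\<^sup>2"
      using mult_left_mono[OF \<open>77/78 * (u - 1/2) * \<theta>\<^sup>2 \<le> 1\<close>, of "9/16"]
      unfolding mult.assoc power2_eq_square by linarith
    finally show ?thesis .
  qed
  thus "\<rho> * \<theta> \<le> 3/4" by (rule power2_le_imp_le) simp
qed

text \<open>In the application \<open>u, sp, sm1, sm2\<close> are \<open>|s|, |s + 1|, |s - 1|, |s - 2|\<close>, \<open>n1, n3\<close> are
  \<open>|A s - A + 1|, |A s - 1|\<close>, the \<open>z\<close>'s are \<open>|\<zeta>|\<close> at \<open>s + 1, s, s - 1, 2 s, 2 s - 1\<close>, and \<open>k = \<surd>\<pi>\<close>.\<close>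

lemma Z_fun_dominance_inequality:
  fixes u n1 n3 sp sm1 sm2 \<rho> \<theta> z1 z0 zm z2 z2m k :: real
  assumes u: "20 \<le> u"
    and n1: "(0.0471 * u + 1.89) / 2 \<le> n1" and n3: "0 \<le> n3" "n3 \<le> 0.0472 * u"
    and sp: "u \<le> sp" "sp \<le> u + 1" and sm1: "0 \<le> sm1" "sm1 \<le> u" and sm2: "0 \<le> sm2" "sm2 \<le> u"
    and \<rho>: "39/80 * u \<le> \<rho>\<^sup>2" "0 < \<rho>" "\<rho> \<le> 0.161 * u"
    and \<theta>: "0 \<le> \<theta>" "\<rho> * \<theta> \<le> 3/4"
    and z: "0.99 \<le> z1" "0.99 \<le> z0" "z0 \<le> 1.01" "0.99 \<le> zm" "zm \<le> 1.01"
      "0.99 \<le> z2" "z2 \<le> 1.01" "0.99 \<le> z2m" "z2m \<le> 1.01"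
    and k: "1.772 \<le> k" "k \<le> 1.7725" "k * k \<le> 3.1416"
  shows "sm2 + k * k * 2 * n3 * sm2 * \<rho> * \<theta> * zm * z2m / (u * z0 * z2)
         + k * sp * sm1 * \<theta> * z2m / (u * z2)
       < n1 * sp * \<rho> * z1 / (k * z0)"
proof -
  \<comment> \<open>Clearing the denominator \<open>u z0 z2\<close> and multiplying by \<open>\<rho>\<close> turns the claim into a polynomial
    inequality in \<open>u\<close>, using \<open>\<rho>\<^sup>2 \<ge> 39 u / 80\<close> on the right and \<open>\<rho> \<theta> \<le> 3/4\<close>, \<open>\<rho> \<le> 0.161 u\<close> on the left.\<close>
  have u0: "0 \<le> u" using u by simp
  have L2: "sm2 * u * z0 * z2 * \<rho> \<le> u * u * 1.01 * 1.01 * (0.161 * u)"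
    using sm2 u0 z \<rho> by (intro mult_mono) auto
  have L3: "k * k * 2 * n3 * sm2 * (\<rho> * \<theta>) * zm * z2m * \<rho>
      \<le> 3.1416 * 2 * (0.0472 * u) * u * (3/4) * 1.01 * 1.01 * (0.161 * u)"
    using k n3 sm2 \<rho> \<theta> z u0 by (intro mult_mono) (auto simp: mult_nonneg_nonneg)
  have L4: "k * sp * sm1 * (\<rho> * \<theta>) * z0 * z2m \<le> 1.7725 * (u + 1) * u * (3/4) * 1.01 * 1.01"
    using k sp sm1 \<rho> \<theta> z u0 by (intro mult_mono) (auto simp: mult_nonneg_nonneg)
  have R0: "(0.0471 * u + 1.89) / 2 * u * u * (39/80 * u) * 0.99 * 0.99 \<le> n1 * sp * u * \<rho>\<^sup>2 * z1 * z2"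
    using n1 sp \<rho> z u0 by (intro mult_mono) auto
  have R: "(0.0471 * u + 1.89) / 2 * u * u * (39/80 * u) * 0.99 * 0.99 / 1.7725
      \<le> n1 * sp * u * \<rho>\<^sup>2 * z1 * z2 / k"
    by (rule frac_le) (use R0 k u0 in \<open>auto intro: order_trans[OF _ R0]\<close>)
  have poly: "u * u * 1.01 * 1.01 * (0.161 * u) + 3.1416 * 2 * (0.0472 * u) * u * (3/4) * 1.01 * 1.01 * (0.161 * u)
      + 1.7725 * (u + 1) * u * (3/4) * 1.01 * 1.01
      < (0.0471 * u + 1.89) / 2 * u * u * (39/80 * u) * 0.99 * 0.99 / 1.7725"
  proof -
    define U2 U3 U4 where "U2 = u * u" and "U3 = u * u * u" and "U4 = u * u * u * u"
    have "u * 20 \<le> U2" "U2 * 20 \<le> U3" "U3 * 20 \<le> U4"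
      unfolding U2_def U3_def U4_def using u u0 by (intro mult_left_mono; simp)+
    moreover have
      "u * u * 1.01 * 1.01 * (0.161 * u) + 3.1416 * 2 * (0.0472 * u) * u * (3/4) * 1.01 * 1.01 * (0.161 * u)
        + 1.7725 * (u + 1) * u * (3/4) * 1.01 * 1.01
       = (1.01 * 1.01 * 0.161 + 3.1416 * 2 * 0.0472 * (3/4) * 1.01 * 1.01 * 0.161) * U3
        + (1.7725 * (3/4) * 1.01 * 1.01) * (U2 + u)"
      "(0.0471 * u + 1.89) / 2 * u * u * (39/80 * u) * 0.99 * 0.99 / 1.7725
       = (0.0471 / 2 * (39/80) * 0.99 * 0.99 / 1.7725) * U4 + (1.89 / 2 * (39/80) * 0.99 * 0.99 / 1.7725) * U3"
      unfolding U2_def U3_def U4_def by (simp_all add: algebra_simps)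
    ultimately show ?thesis using u by (simp add: field_simps)
  qed
  have "(sm2 * u * z0 * z2 + k * k * 2 * n3 * sm2 * \<rho> * \<theta> * zm * z2m + k * sp * sm1 * \<theta> * z0 * z2m) * \<rho>
      < (n1 * sp * u * \<rho> * z1 * z2 / k) * \<rho>"
  proof -
    have "(sm2 * u * z0 * z2 + k * k * 2 * n3 * sm2 * \<rho> * \<theta> * zm * z2m + k * sp * sm1 * \<theta> * z0 * z2m) * \<rho>
        = sm2 * u * z0 * z2 * \<rho> + k * k * 2 * n3 * sm2 * (\<rho> * \<theta>) * zm * z2m * \<rho>
          + k * sp * sm1 * (\<rho> * \<theta>) * z0 * z2m"
      "(n1 * sp * u * \<rho> * z1 * z2 / k) * \<rho> = n1 * sp * u * \<rho>\<^sup>2 * z1 * z2 / k"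
      by (simp_all add: algebra_simps power2_eq_square)
    thus ?thesis using L2 L3 L4 R poly by linarith
  qed
  hence cleared: "sm2 * u * z0 * z2 + k * k * 2 * n3 * sm2 * \<rho> * \<theta> * zm * z2m + k * sp * sm1 * \<theta> * z0 * z2m
      < n1 * sp * u * \<rho> * z1 * z2 / k"
    using \<rho>(2) mult_less_cancel_right_pos by blast
  have "0 < u * z0 * z2" using u z by simp
  from divide_strict_right_mono[OF cleared this] show ?thesis
    using u z k by (simp add: field_simps)
qed

lemma Z_fun_eq_reduced:
  assumes "chi_fun s \<noteq> 0" "chi_fun (2 * s) \<noteq> 0"
  shows "Z_fun s = chi_fun s * chi_fun (2 * s) *
    ((s - 1) * (A_const * s - A_const + 1) * (chi_fun (s + 1) / chi_fun s) - (s - 2)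
     - s * (A_const * s - 1) * (chi_fun (s - 1) / chi_fun s) * (chi_fun (2 * s - 1) / chi_fun (2 * s))
     - (s + 1) * (chi_fun (2 * s - 1) / chi_fun (2 * s)))"
  using assms unfolding Z_fun_def by (simp add: field_simps)

lemma Z_fun_reduced_dominance:
  fixes s :: complex
  assumes s: "20 \<le> Re s"
  shows "norm (s - 2)
       + norm (s * (A_const * s - 1) * (chi_fun (s - 1) / chi_fun s) * (chi_fun (2 * s - 1) / chi_fun (2 * s)))
       + norm ((s + 1) * (chi_fun (2 * s - 1) / chi_fun (2 * s)))
     < norm ((s - 1) * (A_const * s - A_const + 1) * (chi_fun (s + 1) / chi_fun s))"
proof -
  define u where "u = norm s"
  define \<rho> where "\<rho> = norm (Gamma ((s + 1) / 2) / Gamma (s / 2))"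
  define \<theta> where "\<theta> = norm (Gamma (s - 1/2) / Gamma s)"
  define k where "k = sqrt pi"
  define z1 z0 zm z2 z2m where "z1 = norm (zeta_dir (s + 1))" and "z0 = norm (zeta_dir s)"
    and "zm = norm (zeta_dir (s - 1))" and "z2 = norm (zeta_dir (2 * s))" and "z2m = norm (zeta_dir (2 * s - 1))"
  have "s \<noteq> 0" "s - 1 \<noteq> 0" "2 < Re s" "1 < Re s" using s by (auto simp: complex_eq_iff)
  have "norm ((s - 1) * (A_const * s - A_const + 1) * (chi_fun (s + 1) / chi_fun s))
      = norm (A_const * s - A_const + 1) * norm (s + 1) * \<rho> * z1 / (k * z0)"
    unfolding norm_mult norm_chi_fun_succ_div[OF \<open>2 < Re s\<close>]
    using \<open>s - 1 \<noteq> 0\<close> by (simp add: \<rho>_def k_def z1_def z0_def)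
  moreover have "norm (s * (A_const * s - 1) * (chi_fun (s - 1) / chi_fun s) * (chi_fun (2 * s - 1) / chi_fun (2 * s)))
      = k * k * 2 * norm (A_const * s - 1) * norm (s - 2) * \<rho> * \<theta> * zm * z2m / (u * z0 * z2)"
    unfolding norm_mult norm_chi_fun_pred_div[OF \<open>2 < Re s\<close>] norm_chi_fun_double_pred_div[OF \<open>1 < Re s\<close>]
    using \<open>s \<noteq> 0\<close> \<open>s - 1 \<noteq> 0\<close>
    by (simp add: \<rho>_def \<theta>_def u_def k_def z0_def zm_def z2_def z2m_def field_simps)
  moreover have "norm ((s + 1) * (chi_fun (2 * s - 1) / chi_fun (2 * s)))
      = k * norm (s + 1) * norm (s - 1) * \<theta> * z2m / (u * z2)"
    unfolding norm_mult norm_chi_fun_double_pred_div[OF \<open>1 < Re s\<close>]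
    by (simp add: \<theta>_def u_def k_def z2_def z2m_def)
  moreover have "norm (s - 2) + k * k * 2 * norm (A_const * s - 1) * norm (s - 2) * \<rho> * \<theta> * zm * z2m / (u * z0 * z2)
      + k * norm (s + 1) * norm (s - 1) * \<theta> * z2m / (u * z2)
    < norm (A_const * s - A_const + 1) * norm (s + 1) * \<rho> * z1 / (k * z0)"
  proof (rule Z_fun_dominance_inequality)
    show "20 \<le> u" using complex_Re_le_cmod[of s] s by (simp add: u_def)
    show "(0.0471 * u + 1.89) / 2 \<le> norm (A_const * s - A_const + 1)"
      "norm (A_const * s - 1) \<le> 0.0472 * u"
      using norm_A_const_affine_bounds[OF s] by (simp_all add: u_def)
    show "u \<le> norm (s + 1)" "norm (s + 1) \<le> u + 1"
      using norm_le_norm_add_of_real[of s 1] norm_triangle_ineq[of s 1] s by (simp_all add: u_def)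
    show "norm (s - 1) \<le> u" "norm (s - 2) \<le> u"
      using norm_diff_of_real_le[of 1 s] norm_diff_of_real_le[of 2 s] s by (simp_all add: u_def)
    show "39/80 * u \<le> \<rho>\<^sup>2" "\<rho> \<le> 0.161 * u" "\<rho> * \<theta> \<le> 3/4"
      using norm_Gamma_ratio_bounds[OF s] by (simp_all add: u_def \<rho>_def \<theta>_def)
    thus "0 < \<rho>" using \<open>20 \<le> u\<close> by (auto simp: \<rho>_def)
    show "0.99 \<le> z1" "0.99 \<le> z0" "z0 \<le> 1.01" "0.99 \<le> zm" "zm \<le> 1.01"
      "0.99 \<le> z2" "z2 \<le> 1.01" "0.99 \<le> z2m" "z2m \<le> 1.01"
      unfolding z1_def z0_def zm_def z2_def z2m_def
      using s norm_zeta_dir_bounds[of "s + 1"] norm_zeta_dir_bounds[of s] norm_zeta_dir_bounds[of "s - 1"]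
        norm_zeta_dir_bounds[of "2 * s"] norm_zeta_dir_bounds[of "2 * s - 1"]
      by simp_all
    show "1.772 \<le> k" "k \<le> 1.7725" "k * k \<le> 3.1416"
      using sqrt_pi_bounds pi_approx by (simp_all add: k_def)
  qed (simp_all add: \<theta>_def)
  ultimately show ?thesis by simp
qed

theorem proposition2:
  fixes s :: complex
  assumes "Re s \<ge> 20"
  shows "Z_fun s \<noteq> 0"
proof -
  have "chi_fun s \<noteq> 0" "chi_fun (2 * s) \<noteq> 0" using assms by (simp_all add: chi_fun_nonzero)
  moreover have "a - b - c - d \<noteq> 0" if "norm b + norm c + norm d < norm a" for a b c d :: complex
    using that norm_triangle_ineq[of b c] norm_triangle_ineq[of "b + c" d]
    by (auto simp: algebra_simps)
  ultimately show ?thesis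
    using Z_fun_reduced_dominance[OF assms] by (simp add: Z_fun_eq_reduced)
qed

end
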